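(* For all integers $r\ge 0$: \begin{align*} \mathrm{LCD}[6r+3,2] &= 4r+2,\\ \mathrm{LCD}[6r+4,2] &= 4r+2,\\ \mathrm{LCD}[6r+5,2] &= 4r+2,\\ \mathrm{LCD}[6r+6,2] &= 4r+3,\\ \mathrm{LCD}[6r+7,2] &= 4r+4,\\ \mathrm{LCD}[6r+8,2] &= 4r+5. \end{align*} Equivalently, for all integers $r\ge 0$ and $s\in\{3,4,5,6,7,8\}$, \[\mathrm{LCD}[6r+s,2]=4r+\left\lfloor\frac{s}{6}\right\rfloor\bigl(1+(s \bmod 6)\bigr)+2.\]
   Context: All codes are binary linear codes, i.e. subspaces of $\mathbb{F}_2^n$; an $[n,k,d]$ code is one of length $n$, dimension $k$ and minimum Hamming distance $d$. A linear code $C$ is an LCD code (linear code with complementary dual) if $C\cap C^\perp=\{0\}$, where $C^\perp$ is the dual with respect to the standard dot product. For positive integers $n\ge k$, $\mathrm{LCD}[n,k]$ denotes the largest $d$ such that there exists a binary $[n,k,d]$ LCD code. *)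

theory Defs
  imports Main
begin

text \<open>Binary vectors of length n are represented by their supports: a vector
  x in F_2^n is the set of coordinates in {..<n} where it equals 1.
  Vector addition is symmetric difference, the Hamming weight is card,
  and the standard dot product is the parity of card (x \<inter> y).\<close>

definition vadd :: "nat set \<Rightarrow> nat set \<Rightarrow> nat set" where
  "vadd x y = (x - y) \<union> (y - x)"

definition dot :: "nat set \<Rightarrow> nat set \<Rightarrow> bool" where
  "dot x y = odd (card (x \<inter> y))"

definition linear_code :: "nat \<Rightarrow> nat set set \<Rightarrow> bool" where
  "linear_code n C \<longleftrightarrow> C \<subseteq> Pow {..<n} \<and> {} \<in> C \<and> (\<forall>x\<in>C. \<forall>y\<in>C. vadd x y \<in> C)"

text \<open>A binary linear code of dimension k has exactly 2^k codewords.\<close>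
definition code_dim :: "nat set set \<Rightarrow> nat \<Rightarrow> bool" where
  "code_dim C k \<longleftrightarrow> card C = 2 ^ k"

definition dual_code :: "nat \<Rightarrow> nat set set \<Rightarrow> nat set set" where
  "dual_code n C = {y \<in> Pow {..<n}. \<forall>x\<in>C. \<not> dot x y}"

definition min_dist :: "nat set set \<Rightarrow> nat" where
  "min_dist C = Min {card x | x. x \<in> C \<and> x \<noteq> {}}"

definition is_LCD :: "nat \<Rightarrow> nat set set \<Rightarrow> bool" where
  "is_LCD n C \<longleftrightarrow> C \<inter> dual_code n C = {{}}"

definition LCD :: "nat \<Rightarrow> nat \<Rightarrow> nat" where
  "LCD n k = (GREATEST d. \<exists>C. linear_code n C \<and> code_dim C k \<and> is_LCD n C \<and> min_dist C = d)"

end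

theory Submission imports Defs begin

(* A two-dimensional binary code is spanned by two distinct nonzero words a, b, and
   everything about it depends only on the Venn counts x = |a - b|, y = |b - a|,
   z = |a \<inter> b|. Its nonzero weights are x + z, y + z, x + y, and all inner products
   of codewords are parities of these counts, so the code is LCD (no nonzero codeword
   is orthogonal to the whole code) iff at least two of x, y, z are odd, i.e. iff the
   Gram determinant xy + yz + zx is odd. Every such triple with x + y + z \<le> n is
   realised in length n, so LCD[n,2] is the largest min(x + z, y + z, x + y) over
   these triples. The three weights sum to 2(x + y + z), whence LCD[n,2] \<le> 2n/3, and
   floor(2n/3) is attained unless n = 6r + 5 or n = 6r + 6: there a triple reaching
   it has all counts in {2r + 1, 2r + 2}, so two odd counts are both 2r + 1 and give
   a weight of only 4r + 2. *)

lemma vadd_commute: "vadd a b = vadd b a"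
  unfolding vadd_def by blast

lemma vadd_eq_empty_iff [simp]: "vadd a b = {} \<longleftrightarrow> a = b"
  unfolding vadd_def by blast

lemma vadd_eq_left_iff [simp]: "vadd a b = a \<longleftrightarrow> b = {}"
  unfolding vadd_def by blast

lemma vadd_eq_right_iff [simp]: "vadd a b = b \<longleftrightarrow> a = {}"
  unfolding vadd_def by blast

lemma vadd_cancel [simp]:
  "vadd a (vadd a b) = b" "vadd b (vadd a b) = a" "vadd (vadd a b) a = b" "vadd (vadd a b) b = a"
  unfolding vadd_def by blast+

lemma vadd_subset: "a \<subseteq> A \<Longrightarrow> b \<subseteq> A \<Longrightarrow> vadd a b \<subseteq> A"
  unfolding vadd_def by blast

lemma vadd_Int_left: "vadd a b \<inter> a = a - b" "a \<inter> vadd a b = a - b"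
  unfolding vadd_def by blast+

lemma vadd_Int_right: "vadd a b \<inter> b = b - a" "b \<inter> vadd a b = b - a"
  unfolding vadd_def by blast+

lemma card_Venn_counts:
  assumes "finite a" "finite b"
  shows "card a = card (a - b) + card (a \<inter> b)"
    and "card b = card (b - a) + card (a \<inter> b)"
    and "card (vadd a b) = card (a - b) + card (b - a)"
    and "card (a \<union> b) = card (a - b) + card (b - a) + card (a \<inter> b)"
proof -
  show a: "card a = card (a - b) + card (a \<inter> b)"
    using card_Int_Diff[of a b] assms(1) by simp
  show b: "card b = card (b - a) + card (a \<inter> b)"
    using card_Int_Diff[of b a] assms(2) by (simp add: Int_commute)
  show "card (vadd a b) = card (a - b) + card (b - a)"
    unfolding vadd_def using assms by (intro card_Un_disjoint) auto
  show "card (a \<union> b) = card (a - b) + card (b - a) + card (a \<inter> b)"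
    using card_Un_Int[OF assms] a b by simp
qed

lemma dot_empty [simp]: "\<not> dot {} a" "\<not> dot a {}"
  unfolding dot_def by simp_all

definition span2 :: "nat set \<Rightarrow> nat set \<Rightarrow> nat set set" where
  "span2 a b = {{}, a, b, vadd a b}"

lemma linear_code_span2:
  "a \<subseteq> {..<n} \<Longrightarrow> b \<subseteq> {..<n} \<Longrightarrow> linear_code n (span2 a b)"
  unfolding linear_code_def span2_def
  by (auto simp: vadd_subset vadd_commute)

lemma card_span2:
  assumes "a \<noteq> {}" "b \<noteq> {}" "a \<noteq> b"
  shows "card (span2 a b) = 4"
proof -
  have "vadd a b \<noteq> {}" "vadd a b \<noteq> a" "vadd a b \<noteq> b"
    using assms by simp_all
  then show ?thesis
    using assms unfolding span2_def by (simp add: eq_commute)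
qed

lemma obtain_span2_of_linear_code_card_4:
  assumes "linear_code n C" "card C = 4"
  obtains a b where "C = span2 a b" "a \<noteq> {}" "b \<noteq> {}" "a \<noteq> b"
    "a \<subseteq> {..<n}" "b \<subseteq> {..<n}"
proof -
  have fin: "finite C"
    using assms(2) card.infinite by fastforce
  have "{} \<in> C" and sub: "C \<subseteq> Pow {..<n}"
    and closed: "\<And>x y. x \<in> C \<Longrightarrow> y \<in> C \<Longrightarrow> vadd x y \<in> C"
    using assms(1) unfolding linear_code_def by auto
  have "C - {{}} \<noteq> {}"
    using assms(2) card_mono[of "{{}}" C] by force
  then obtain a where a: "a \<in> C" "a \<noteq> {}"
    by blast
  have "card {{}, a} = 2"
    using a by simp
  then have "C - {{}, a} \<noteq> {}"
    using assms(2) card_mono[of "{{}, a}" C] by auto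
  then obtain b where b: "b \<in> C" "b \<noteq> {}" "b \<noteq> a"
    by blast
  have "span2 a b \<subseteq> C"
    using \<open>{} \<in> C\<close> a b closed unfolding span2_def by blast
  moreover have "card (span2 a b) = card C"
    using card_span2 a b assms(2) by simp
  ultimately have "C = span2 a b"
    using card_subset_eq[OF fin] by metis
  with a b sub that show ?thesis
    by blast
qed

lemma min_dist_span2:
  assumes "a \<noteq> {}" "b \<noteq> {}" "a \<noteq> b"
  shows "min_dist (span2 a b) = min (card a) (min (card b) (card (vadd a b)))"
proof -
  have "{card x | x. x \<in> span2 a b \<and> x \<noteq> {}} = {card a, card b, card (vadd a b)}"
    using assms unfolding span2_def by auto
  then show ?thesis
    unfolding min_dist_def by (simp add: min.assoc)
qed

lemma is_LCD_span2_iff: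
  assumes "a \<subseteq> {..<n}" "b \<subseteq> {..<n}" "a \<noteq> {}" "b \<noteq> {}" "a \<noteq> b"
  shows "is_LCD n (span2 a b) \<longleftrightarrow> (\<forall>c\<in>{a, b, vadd a b}. \<exists>d\<in>{a, b, vadd a b}. dot d c)"
  using assms vadd_subset[OF assms(1,2)]
  unfolding is_LCD_def dual_code_def span2_def by auto

definition at_least_two_odd :: "nat \<Rightarrow> nat \<Rightarrow> nat \<Rightarrow> bool" where
  "at_least_two_odd x y z \<longleftrightarrow> (odd x \<or> odd y) \<and> (odd y \<or> odd z) \<and> (odd x \<or> odd z)"

lemma is_LCD_span2_iff_at_least_two_odd:
  assumes "a \<subseteq> {..<n}" "b \<subseteq> {..<n}" "a \<noteq> {}" "b \<noteq> {}" "a \<noteq> b"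
  shows "is_LCD n (span2 a b) \<longleftrightarrow> at_least_two_odd (card (a - b)) (card (b - a)) (card (a \<inter> b))"
proof -
  define x y z where "x = card (a - b)" and "y = card (b - a)" and "z = card (a \<inter> b)"
  have "finite a" "finite b"
    using assms finite_subset by blast+
  then have "card a = x + z" "card b = y + z" "card (vadd a b) = x + y"
    unfolding x_def y_def z_def by (simp_all add: card_Venn_counts[of a b])
  then have "dot a a = odd (x + z)" "dot b b = odd (y + z)" "dot (vadd a b) (vadd a b) = odd (x + y)"
    "dot a b = odd z" "dot b a = odd z"
    "dot a (vadd a b) = odd x" "dot (vadd a b) a = odd x"
    "dot b (vadd a b) = odd y" "dot (vadd a b) b = odd y"
    unfolding dot_def x_def y_def z_def by (simp_all add: vadd_Int_left vadd_Int_right Int_commute)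
  then show ?thesis
    unfolding is_LCD_span2_iff[OF assms] at_least_two_odd_def
      x_def[symmetric] y_def[symmetric] z_def[symmetric]
    by (simp add: even_add) blast
qed

definition min_pair_sum :: "nat \<Rightarrow> nat \<Rightarrow> nat \<Rightarrow> nat" where
  "min_pair_sum x y z = min (x + z) (min (y + z) (x + y))"

lemma obtain_Venn_counts_of_LCD_code_dim_2:
  assumes "linear_code n C" "code_dim C 2" "is_LCD n C"
  obtains x y z where "x + y + z \<le> n" "at_least_two_odd x y z" "min_dist C = min_pair_sum x y z"
proof -
  have "card C = 4"
    using assms(2) unfolding code_dim_def by simp
  then obtain a b where ab: "C = span2 a b" "a \<noteq> {}" "b \<noteq> {}" "a \<noteq> b"
    "a \<subseteq> {..<n}" "b \<subseteq> {..<n}"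
    by (rule obtain_span2_of_linear_code_card_4[OF assms(1)])
  define x y z where "x = card (a - b)" and "y = card (b - a)" and "z = card (a \<inter> b)"
  have "finite a" "finite b"
    using ab finite_subset by blast+
  then have counts: "card a = x + z" "card b = y + z" "card (vadd a b) = x + y"
    "card (a \<union> b) = x + y + z"
    unfolding x_def y_def z_def by (simp_all add: card_Venn_counts[of a b])
  have "x + y + z \<le> n"
    using card_mono[of "{..<n}" "a \<union> b"] ab counts by simp
  moreover have "at_least_two_odd x y z"
    using is_LCD_span2_iff_at_least_two_odd[OF ab(5,6,2-4)] assms(3) ab(1)
    unfolding x_def y_def z_def by simp
  moreover have "min_dist C = min_pair_sum x y z"
    unfolding ab(1) min_dist_span2[OF ab(2-4)] counts min_pair_sum_def ..
  ultimately show ?thesis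
    using that by blast
qed

lemma obtain_LCD_code_dim_2_of_Venn_counts:
  assumes "x + y + z \<le> n" "at_least_two_odd x y z"
  obtains C where "linear_code n C" "code_dim C 2" "is_LCD n C" "min_dist C = min_pair_sum x y z"
proof -
  define a b where "a = {..<x + z}" and "b = {x..<x + y + z}"
  have counts: "a - b = {..<x}" "b - a = {x + z..<x + y + z}" "a \<inter> b = {x..<x + z}"
    unfolding a_def b_def by auto
  have pos: "0 < x + z" "0 < y + z" "0 < x + y"
    using assms(2) unfolding at_least_two_odd_def by (auto dest: odd_pos)
  have "a \<noteq> b"
  proof
    assume "a = b"
    then have "{..<x} = {}" "{x + z..<x + y + z} = {}"
      using counts by auto
    with pos(3) show False
      by (simp add: lessThan_empty_iff)
  qed
  then have ab: "a \<subseteq> {..<n}" "b \<subseteq> {..<n}" "a \<noteq> {}" "b \<noteq> {}" "a \<noteq> b"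
    using assms(1) pos unfolding a_def b_def by auto
  show ?thesis
  proof
    show "linear_code n (span2 a b)"
      using linear_code_span2 ab by blast
    show "code_dim (span2 a b) 2"
      unfolding code_dim_def using card_span2 ab by simp
    show "is_LCD n (span2 a b)"
      using is_LCD_span2_iff_at_least_two_odd[OF ab] assms(2) unfolding counts by simp
    show "min_dist (span2 a b) = min_pair_sum x y z"
      using min_dist_span2[OF ab(3-5)] card_Venn_counts(3)[of a b] counts
      by (simp add: min_pair_sum_def a_def b_def)
  qed
qed

lemma LCD_2_eqI:
  assumes "x + y + z \<le> n" "at_least_two_odd x y z" "min_pair_sum x y z = D"
    and "\<And>x y z. x + y + z \<le> n \<Longrightarrow> at_least_two_odd x y z \<Longrightarrow> min_pair_sum x y z \<le> D"
  shows "LCD n 2 = D"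
  unfolding LCD_def
proof (rule Greatest_equality)
  show "\<exists>C. linear_code n C \<and> code_dim C 2 \<and> is_LCD n C \<and> min_dist C = D"
    using obtain_LCD_code_dim_2_of_Venn_counts[OF assms(1,2)] assms(3) by metis
next
  fix d
  assume "\<exists>C. linear_code n C \<and> code_dim C 2 \<and> is_LCD n C \<and> min_dist C = d"
  then obtain C where "linear_code n C" "code_dim C 2" "is_LCD n C" "min_dist C = d"
    by blast
  then show "d \<le> D"
    using obtain_Venn_counts_of_LCD_code_dim_2 assms(4) by metis
qed

lemma min_pair_sum_le_two_thirds: "3 * min_pair_sum x y z \<le> 2 * (x + y + z)"
  unfolding min_pair_sum_def by (simp add: min_def)

lemma LCD_2_eq_two_thirds:
  assumes "x + y + z \<le> n" "at_least_two_odd x y z" "min_pair_sum x y z = D"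
    and "2 * n < 3 * (D + 1)"
  shows "LCD n 2 = D"
proof (rule LCD_2_eqI[OF assms(1-3)])
  fix x' y' z'
  assume "x' + y' + z' \<le> n"
  then show "min_pair_sum x' y' z' \<le> D"
    using min_pair_sum_le_two_thirds[of x' y' z'] assms(4) by simp
qed

lemma min_pair_sum_le_6r5:
  assumes "x + y + z \<le> 6 * r + 5" "at_least_two_odd x y z"
  shows "min_pair_sum x y z \<le> 4 * r + 2"
proof (rule ccontr)
  assume "\<not> ?thesis"
  then have pairs: "4 * r + 3 \<le> x + z" "4 * r + 3 \<le> y + z" "4 * r + 3 \<le> x + y"
    unfolding min_pair_sum_def by auto
  have odd_le: "v \<le> 2 * r + 1" if "odd v" "v \<le> 2 * r + 2" for v
    using that by (cases "v = 2 * r + 2") auto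
  have "x \<le> 2 * r + 2" "y \<le> 2 * r + 2" "z \<le> 2 * r + 2"
    using pairs assms(1) by linarith+
  then have "odd x \<Longrightarrow> x \<le> 2 * r + 1" "odd y \<Longrightarrow> y \<le> 2 * r + 1" "odd z \<Longrightarrow> z \<le> 2 * r + 1"
    using odd_le by blast+
  then show False
    using assms(2) pairs unfolding at_least_two_odd_def by auto
qed

lemma min_pair_sum_le_6r6:
  assumes "x + y + z \<le> 6 * r + 6" "at_least_two_odd x y z"
  shows "min_pair_sum x y z \<le> 4 * r + 3"
proof (rule ccontr)
  assume "\<not> ?thesis"
  then have "4 * r + 4 \<le> x + z" "4 * r + 4 \<le> y + z" "4 * r + 4 \<le> x + y"
    unfolding min_pair_sum_def by auto
  then have "x = 2 * r + 2" "y = 2 * r + 2" "z = 2 * r + 2"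
    using assms(1) by linarith+
  then show False
    using assms(2) unfolding at_least_two_odd_def by simp
qed

theorem theorem2p6:
  fixes r :: nat
  shows "LCD (6*r+3) 2 = 4*r+2 \<and>
         LCD (6*r+4) 2 = 4*r+2 \<and>
         LCD (6*r+5) 2 = 4*r+2 \<and>
         LCD (6*r+6) 2 = 4*r+3 \<and>
         LCD (6*r+7) 2 = 4*r+4 \<and>
         LCD (6*r+8) 2 = 4*r+5"
proof (intro conjI)
  show "LCD (6*r+3) 2 = 4*r+2"
    by (rule LCD_2_eq_two_thirds[of "2*r+1" "2*r+1" "2*r+1"])
      (simp_all add: at_least_two_odd_def min_pair_sum_def)
  show "LCD (6*r+4) 2 = 4*r+2"
    by (rule LCD_2_eq_two_thirds[of "2*r+1" "2*r+1" "2*r+1"])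
      (simp_all add: at_least_two_odd_def min_pair_sum_def)
  show "LCD (6*r+5) 2 = 4*r+2"
    by (rule LCD_2_eqI[of "2*r+1" "2*r+1" "2*r+1", OF _ _ _ min_pair_sum_le_6r5])
      (simp_all add: at_least_two_odd_def min_pair_sum_def)
  show "LCD (6*r+6) 2 = 4*r+3"
    by (rule LCD_2_eqI[of "2*r+1" "2*r+2" "2*r+3", OF _ _ _ min_pair_sum_le_6r6])
      (simp_all add: at_least_two_odd_def min_pair_sum_def)
  show "LCD (6*r+7) 2 = 4*r+4"
    by (rule LCD_2_eq_two_thirds[of "2*r+1" "2*r+3" "2*r+3"])
      (simp_all add: at_least_two_odd_def min_pair_sum_def)
  show "LCD (6*r+8) 2 = 4*r+5"
    by (rule LCD_2_eq_two_thirds[of "2*r+3" "2*r+3" "2*r+2"])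
      (simp_all add: at_least_two_odd_def min_pair_sum_def)
qed

end
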